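(* Let $\ell\in\mathbb R\setminus\{0\}$ and $\sigma>0$. For $(a,b)\in\mathbb R^2$ let $\mathcal N_{(a,b),\sigma}$ be the Borel probability measure on $\mathbb R^2$ with density $p(a',b')=\frac{1}{2\pi\sigma^2}\exp\!\big(-\frac{(a-a')^2+(b-b')^2}{2\sigma^2}\big)$. Define, for $x,y\in\{0,1\}$, $$\mu_{x,y}=\tfrac12\big[\mathcal N_{(\ell,(-1)^{xy}\ell),\sigma}+\mathcal N_{(-\ell,-(-1)^{xy}\ell),\sigma}\big].$$ Then $\boldsymbol\mu=(\mu_{x,y})_{x,y\in\{0,1\}}$ is a no-signaling behaviour, and, writing $\langle A_x^{m}B_y^{n}\rangle=\int_{\mathbb R^2}a^m b^n\,d\mu_{x,y}(a,b)$, $$\big[\langle A_0B_0\rangle-\langle A_1B_1\rangle\big]^2+\big[\langle A_0B_1\rangle+\langle A_1B_0\rangle\big]^2-\sum_{x,y\in\{0,1\}}\langle A_x^2B_y^2\rangle = 8\ell^4-4(\sigma^2+\ell^2)^2 .$$ In particular, $\boldsymbol\mu$ violates the CFRD inequality $\big[\langle A_0B_0\rangle-\langle A_1B_1\rangle\big]^2+\big[\langle A_0B_1\rangle+\langle A_1B_0\rangle\big]^2\le \sum_{x,y}\langle A_x^2B_y^2\rangle$ if and only if $|\ell|/\sigma>\sqrt{1+\sqrt2}$.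
   Context: A behaviour is a family $\boldsymbol\mu=(\mu_{x,y})_{x,y\in\{0,1\}}$ of Borel probability measures on $\mathbb R\times\mathbb R$ (input $x$ for Alice, $y$ for Bob; first coordinate is Alice's output, second Bob's). It is no-signaling if $\mu_{x,0}(A\times\mathbb R)=\mu_{x,1}(A\times\mathbb R)$ for all $x$ and Borel $A\subseteq\mathbb R$, and $\mu_{0,y}(\mathbb R\times B)=\mu_{1,y}(\mathbb R\times B)$ for all $y$ and Borel $B\subseteq\mathbb R$. *)

theory Defs
  imports "HOL-Probability.Probability"
begin

definition gauss2_density :: "real \<Rightarrow> real \<Rightarrow> real \<Rightarrow> real \<times> real \<Rightarrow> real" where
  "gauss2_density a b s = (\<lambda>(a', b'). 1 / (2 * pi * s^2) * exp (- ((a - a')^2 + (b - b')^2) / (2 * s^2)))"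

definition gauss2 :: "real \<Rightarrow> real \<Rightarrow> real \<Rightarrow> (real \<times> real) measure" where
  "gauss2 a b s = density lborel (\<lambda>z. ennreal (gauss2_density a b s z))"

definition half_mix :: "'a measure \<Rightarrow> 'a measure \<Rightarrow> 'a measure" where
  "half_mix M N = measure_of (space M) (sets M) (\<lambda>A. (emeasure M A + emeasure N A) / 2)"

definition behaviour :: "(nat \<Rightarrow> nat \<Rightarrow> (real \<times> real) measure) \<Rightarrow> bool" where
  "behaviour \<mu> \<longleftrightarrow> (\<forall>x\<in>{0,1}. \<forall>y\<in>{0,1}. prob_space (\<mu> x y) \<and> sets (\<mu> x y) = sets borel)"

definition no_signaling :: "(nat \<Rightarrow> nat \<Rightarrow> (real \<times> real) measure) \<Rightarrow> bool" where
  "no_signaling \<mu> \<longleftrightarrow>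
     (\<forall>x\<in>{0,1}. \<forall>A\<in>sets (borel :: real measure). emeasure (\<mu> x 0) (A \<times> UNIV) = emeasure (\<mu> x 1) (A \<times> UNIV)) \<and>
     (\<forall>y\<in>{0,1}. \<forall>B\<in>sets (borel :: real measure). emeasure (\<mu> 0 y) (UNIV \<times> B) = emeasure (\<mu> 1 y) (UNIV \<times> B))"

definition moment :: "(nat \<Rightarrow> nat \<Rightarrow> (real \<times> real) measure) \<Rightarrow> nat \<Rightarrow> nat \<Rightarrow> nat \<Rightarrow> nat \<Rightarrow> real" where
  "moment \<mu> x y m n = (\<integral>(a, b). a ^ m * b ^ n \<partial>(\<mu> x y))"

definition gauss_behaviour :: "real \<Rightarrow> real \<Rightarrow> nat \<Rightarrow> nat \<Rightarrow> (real \<times> real) measure" where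
  "gauss_behaviour l s x y =
     half_mix (gauss2 l ((-1) ^ (x * y) * l) s) (gauss2 (- l) (- ((-1) ^ (x * y) * l)) s)"

end

theory Submission
  imports Defs
begin

text \<open>Each \<open>\<mu>\<^sub>x\<^sub>y\<close> is the even mixture of the product Gaussians centred at \<open>\<pm>(\<ell>, (-1)\<^sup>x\<^sup>y \<ell>)\<close>.
  Since the two means are antipodal, both marginals are \<open>(N(\<ell>,\<sigma>) + N(-\<ell>,\<sigma>))/2\<close>, whatever
  the other party's input, so the behaviour is no-signaling. Within each product component the
  moments factor, giving \<open>\<langle>A\<^sub>xB\<^sub>y\<rangle> = (-1)\<^sup>x\<^sup>y \<ell>\<^sup>2\<close> and \<open>\<langle>A\<^sub>x\<^sup>2B\<^sub>y\<^sup>2\<rangle> = (\<ell>\<^sup>2 + \<sigma>\<^sup>2)\<^sup>2\<close>. The left-hand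
  side of the CFRD inequality is therefore \<open>(2\<ell>\<^sup>2)\<^sup>2 + (2\<ell>\<^sup>2)\<^sup>2 = 8\<ell>\<^sup>4\<close>, the right-hand side
  \<open>4(\<ell>\<^sup>2 + \<sigma>\<^sup>2)\<^sup>2\<close>, and \<open>\<ell>\<^sup>2 + \<sigma>\<^sup>2 < \<surd>2 \<ell>\<^sup>2\<close> is equivalent to \<open>(1 + \<surd>2) \<sigma>\<^sup>2 < \<ell>\<^sup>2\<close>.\<close>

lemma emeasure_density_average:
  fixes f g :: "'a \<Rightarrow> real"
  assumes [measurable]: "f \<in> borel_measurable M" "g \<in> borel_measurable M"
    and nonneg: "\<And>x. f x \<ge> 0" "\<And>x. g x \<ge> 0"
  shows "emeasure (density M (\<lambda>x. (f x + g x) / 2)) A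
       = (emeasure (density M f) A + emeasure (density M g) A) / 2"
proof (cases "A \<in> sets M")
  case True
  have "ennreal ((f x + g x) / 2) * indicator A x
      = (ennreal (f x) * indicator A x + ennreal (g x) * indicator A x) / 2" for x
  proof -
    have "ennreal ((f x + g x) / 2) = (ennreal (f x) + ennreal (g x)) / 2"
      using nonneg[of x] by (simp add: divide_ennreal[symmetric] ennreal_plus)
    then show ?thesis
      by (simp add: divide_ennreal_def distrib_left distrib_right mult.commute mult.left_commute)
  qed
  with True show ?thesis
    by (simp add: emeasure_density nn_integral_divide nn_integral_add)
qed (simp add: emeasure_notin_sets)

lemma half_mix_density:
  fixes f g :: "'a \<Rightarrow> real"
  assumes "f \<in> borel_measurable M" "g \<in> borel_measurable M" "\<And>x. f x \<ge> 0" "\<And>x. g x \<ge> 0"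
  shows "half_mix (density M f) (density M g) = density M (\<lambda>x. (f x + g x) / 2)"
proof -
  have "(\<lambda>A. (emeasure (density M f) A + emeasure (density M g) A) / 2)
      = emeasure (density M (\<lambda>x. (f x + g x) / 2))"
    using emeasure_density_average[OF assms] by auto
  then show ?thesis
    unfolding half_mix_def by (metis measure_of_of_measure space_density sets_density)
qed

lemma emeasure_half_mix_density:
  fixes f g :: "'a \<Rightarrow> real"
  assumes "f \<in> borel_measurable M" "g \<in> borel_measurable M" "\<And>x. f x \<ge> 0" "\<And>x. g x \<ge> 0"
  shows "emeasure (half_mix (density M f) (density M g)) A
       = (emeasure (density M f) A + emeasure (density M g) A) / 2"
  unfolding half_mix_density[OF assms] by (rule emeasure_density_average[OF assms])

lemma prob_space_half_mix_density:
  fixes f g :: "'a \<Rightarrow> real"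
  assumes "f \<in> borel_measurable M" "g \<in> borel_measurable M" "\<And>x. f x \<ge> 0" "\<And>x. g x \<ge> 0"
    and "prob_space (density M f)" "prob_space (density M g)"
  shows "prob_space (half_mix (density M f) (density M g))"
proof
  have "emeasure (density M f) (space M) = 1" "emeasure (density M g) (space M) = 1"
    using assms(5,6) by (metis prob_space.emeasure_space_1 space_density)+
  then show "emeasure (half_mix (density M f) (density M g)) (space (half_mix (density M f) (density M g))) = 1"
    by (simp add: half_mix_density[OF assms(1-4)] emeasure_density_average[OF assms(1-4)]
        ennreal_divide_self)
qed

lemma integral_half_mix_density:
  fixes f g h :: "'a \<Rightarrow> real"
  assumes [measurable]: "f \<in> borel_measurable M" "g \<in> borel_measurable M" "h \<in> borel_measurable M"
    and nonneg: "\<And>x. f x \<ge> 0" "\<And>x. g x \<ge> 0"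
    and "integrable (density M f) h" "integrable (density M g) h"
  shows "integral\<^sup>L (half_mix (density M f) (density M g)) h
       = (integral\<^sup>L (density M f) h + integral\<^sup>L (density M g) h) / 2"
proof -
  have fh: "integrable M (\<lambda>x. f x * h x)" and gh: "integrable M (\<lambda>x. g x * h x)"
    using assms(6,7) nonneg by (simp_all add: integrable_density)
  have "integral\<^sup>L (half_mix (density M f) (density M g)) h = (\<integral>x. (f x + g x) / 2 * h x \<partial>M)"
    using nonneg by (simp add: half_mix_density[OF assms(1,2) nonneg] integral_density)
  also have "\<dots> = (\<integral>x. (f x * h x + g x * h x) / 2 \<partial>M)"
    by (simp add: field_simps)
  also have "\<dots> = ((\<integral>x. f x * h x \<partial>M) + (\<integral>x. g x * h x \<partial>M)) / 2"
    using fh gh by simp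
  also have "\<dots> = (integral\<^sup>L (density M f) h + integral\<^sup>L (density M g) h) / 2"
    using nonneg by (simp add: integral_density)
  finally show ?thesis .
qed

lemma (in pair_sigma_finite) integrable_pair_measure_mult:
  fixes p :: "'a \<Rightarrow> real" and q :: "'b \<Rightarrow> real"
  assumes "integrable M1 p" "integrable M2 q"
  shows "integrable (M1 \<Otimes>\<^sub>M M2) (\<lambda>(x, y). p x * q y)"
proof (rule Fubini_integrable)
  show "(\<lambda>(x, y). p x * q y) \<in> borel_measurable (M1 \<Otimes>\<^sub>M M2)"
    using assms by measurable
  have "integrable M1 (\<lambda>x. norm (p x) * (\<integral>y. norm (q y) \<partial>M2))"
    using assms(1) by (intro integrable_mult_left integrable_norm)
  then show "integrable M1 (\<lambda>x. \<integral>y. norm (case (x, y) of (x, y) \<Rightarrow> p x * q y) \<partial>M2)"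
    by (simp add: abs_mult)
  show "AE x in M1. integrable M2 (\<lambda>y. case (x, y) of (x, y) \<Rightarrow> p x * q y)"
    using assms(2) by auto
qed

lemma (in pair_sigma_finite) integral_pair_measure_mult:
  fixes p :: "'a \<Rightarrow> real" and q :: "'b \<Rightarrow> real"
  assumes "integrable M1 p" "integrable M2 q"
  shows "(\<integral>(x, y). p x * q y \<partial>(M1 \<Otimes>\<^sub>M M2)) = (\<integral>x. p x \<partial>M1) * (\<integral>y. q y \<partial>M2)"
  using integral_fst'[OF integrable_pair_measure_mult[OF assms]] by simp

abbreviation normal_measure :: "real \<Rightarrow> real \<Rightarrow> real measure" where
  "normal_measure a s \<equiv> density lborel (\<lambda>x. ennreal (normal_density a s x))"

lemma integral_normal_measure_id:
  assumes "s > 0"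
  shows "integrable (normal_measure a s) (\<lambda>x. x)" "(\<integral>x. x \<partial>normal_measure a s) = a"
  using integrable_normal_moment_nz_1[OF assms, of a] integral_normal_moment_nz_1[OF assms, of a]
  by (simp_all add: integrable_density integral_density)

lemma integral_normal_measure_square:
  assumes "s > 0"
  shows "integrable (normal_measure a s) (\<lambda>x. x\<^sup>2)"
    "(\<integral>x. x\<^sup>2 \<partial>normal_measure a s) = a\<^sup>2 + s\<^sup>2"
proof -
  let ?n = "normal_density a s"
  have split: "?n x * x\<^sup>2 = ?n x * (x - a) ^ (2 * 1) + 2 * a * (?n x * x) - a\<^sup>2 * ?n x" for x
    by (simp add: power2_eq_square algebra_simps)
  note centred = integrable_normal_moment[OF assms, of a "2 * 1"]
    and first = integrable_normal_moment_nz_1[OF assms, of a]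
  have "integrable lborel (\<lambda>x. ?n x * x\<^sup>2)"
    unfolding split using centred first
    by (intro Bochner_Integration.integrable_diff Bochner_Integration.integrable_add
        integrable_mult_right integrable_normal_density assms)
  then show "integrable (normal_measure a s) (\<lambda>x. x\<^sup>2)"
    by (simp add: integrable_density)
  have "(\<integral>x. ?n x * x\<^sup>2 \<partial>lborel) = s\<^sup>2 + 2 * a * a - a\<^sup>2"
    unfolding split
    using centred first integrable_normal_density[OF assms, of a] integral_normal_moment_even[OF assms, of a 1]
      integral_normal_moment_nz_1[OF assms, of a] integral_normal_density[OF assms, of a]
    by (simp add: Bochner_Integration.integral_diff Bochner_Integration.integral_add)
  then show "(\<integral>x. x\<^sup>2 \<partial>normal_measure a s) = a\<^sup>2 + s\<^sup>2"
    by (simp add: integral_density power2_eq_square)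
qed

lemma gauss2_density_eq_normal_density:
  assumes "s > 0"
  shows "gauss2_density a b s (x, y) = normal_density a s x * normal_density b s y"
proof -
  have const: "1 / (2 * pi * s\<^sup>2) = 1 / sqrt (2 * pi * s\<^sup>2) * (1 / sqrt (2 * pi * s\<^sup>2))"
    using assms by (simp add: real_sqrt_mult_self)
  have expo: "- ((a - x)\<^sup>2 + (b - y)\<^sup>2) / (2 * s\<^sup>2) = - (x - a)\<^sup>2 / (2 * s\<^sup>2) + - (y - b)\<^sup>2 / (2 * s\<^sup>2)"
    by (simp add: power2_commute[of a x] power2_commute[of b y] diff_divide_distrib)
  show ?thesis
    unfolding gauss2_density_def normal_density_def prod.case expo exp_add const
    by (simp only: mult_ac)
qed

lemma gauss2_density_measurable[measurable]: "gauss2_density a b s \<in> borel_measurable borel"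
proof -
  have "gauss2_density a b s
      = (\<lambda>z. 1 / (2 * pi * s^2) * exp (- ((a - fst z)^2 + (b - snd z)^2) * (1 / (2 * s^2))))"
    unfolding gauss2_density_def by (auto simp: fun_eq_iff)
  also have "\<dots> \<in> borel_measurable borel"
    by (intro borel_measurable_continuous_onI continuous_intros)
  finally show ?thesis .
qed

lemma gauss2_density_nonneg: "gauss2_density a b s z \<ge> 0"
  unfolding gauss2_density_def by (simp add: case_prod_beta)

lemma gauss2_eq_pair_measure:
  assumes "s > 0"
  shows "gauss2 a b s = normal_measure a s \<Otimes>\<^sub>M normal_measure b s"
proof -
  have "normal_measure a s \<Otimes>\<^sub>M normal_measure b s
      = density (lborel \<Otimes>\<^sub>M lborel) (\<lambda>(x, y). ennreal (normal_density a s x) * ennreal (normal_density b s y))"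
    by (rule pair_measure_density)
      (auto intro: prob_space_imp_sigma_finite prob_space_normal_density assms lborel.sigma_finite_measure_axioms)
  also have "\<dots> = density lborel (\<lambda>z. ennreal (gauss2_density a b s z))"
    unfolding lborel_prod
    by (auto simp: fun_eq_iff gauss2_density_eq_normal_density[OF assms] ennreal_mult'' intro!: arg_cong[where f="density lborel"])
  finally show ?thesis unfolding gauss2_def ..
qed

lemma pair_prob_space_normal_measure:
  assumes "s > 0"
  shows "pair_prob_space (normal_measure a s) (normal_measure b s)"
  by (simp add: pair_prob_space_def pair_sigma_finite_def prob_space_normal_density[OF assms]
      prob_space_imp_sigma_finite)

lemma prob_space_gauss2:
  assumes "s > 0"
  shows "prob_space (gauss2 a b s)"
proof -
  interpret pair_prob_space "normal_measure a s" "normal_measure b s"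
    using pair_prob_space_normal_measure[OF assms] .
  show ?thesis unfolding gauss2_eq_pair_measure[OF assms] by unfold_locales
qed

lemma emeasure_gauss2_Times:
  assumes "s > 0" "A \<in> sets borel" "B \<in> sets borel"
  shows "emeasure (gauss2 a b s) (A \<times> B) = emeasure (normal_measure a s) A * emeasure (normal_measure b s) B"
proof -
  interpret prob_space "normal_measure b s" using prob_space_normal_density[OF assms(1)] .
  show ?thesis unfolding gauss2_eq_pair_measure[OF assms(1)]
    by (rule emeasure_pair_measure_Times) (use assms in auto)
qed

lemma emeasure_gauss2_marginals:
  assumes "s > 0" "A \<in> sets borel"
  shows "emeasure (gauss2 a b s) (A \<times> UNIV) = emeasure (normal_measure a s) A"
    "emeasure (gauss2 a b s) (UNIV \<times> A) = emeasure (normal_measure b s) A"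
  using assms prob_space.emeasure_space_1[OF prob_space_normal_density[OF assms(1)]]
  by (simp_all add: emeasure_gauss2_Times)

lemma integral_gauss2_mult:
  fixes p q :: "real \<Rightarrow> real"
  assumes "s > 0" "integrable (normal_measure a s) p" "integrable (normal_measure b s) q"
  shows "integrable (gauss2 a b s) (\<lambda>(x, y). p x * q y)"
    "(\<integral>(x, y). p x * q y \<partial>gauss2 a b s) = (\<integral>x. p x \<partial>normal_measure a s) * (\<integral>y. q y \<partial>normal_measure b s)"
proof -
  interpret pair_prob_space "normal_measure a s" "normal_measure b s"
    using pair_prob_space_normal_measure[OF assms(1)] .
  show "integrable (gauss2 a b s) (\<lambda>(x, y). p x * q y)"
    "(\<integral>(x, y). p x * q y \<partial>gauss2 a b s) = (\<integral>x. p x \<partial>normal_measure a s) * (\<integral>y. q y \<partial>normal_measure b s)"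
    unfolding gauss2_eq_pair_measure[OF assms(1)]
    using integrable_pair_measure_mult[OF assms(2,3)] integral_pair_measure_mult[OF assms(2,3)] .
qed

lemma half_mix_gauss2:
  "half_mix (gauss2 a b s) (gauss2 a' b' s)
     = density lborel (\<lambda>z. (gauss2_density a b s z + gauss2_density a' b' s z) / 2)"
  unfolding gauss2_def by (rule half_mix_density) (simp_all add: gauss2_density_nonneg)

lemma emeasure_half_mix_gauss2:
  "emeasure (half_mix (gauss2 a b s) (gauss2 a' b' s)) A
     = (emeasure (gauss2 a b s) A + emeasure (gauss2 a' b' s) A) / 2"
  unfolding gauss2_def by (rule emeasure_half_mix_density) (simp_all add: gauss2_density_nonneg)

lemma prob_space_half_mix_gauss2:
  assumes "s > 0"
  shows "prob_space (half_mix (gauss2 a b s) (gauss2 a' b' s))"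
  using prob_space_gauss2[OF assms] unfolding gauss2_def
  by (intro prob_space_half_mix_density) (simp_all add: gauss2_density_nonneg)

lemma integral_half_mix_gauss2_mult:
  fixes p q :: "real \<Rightarrow> real"
  assumes "s > 0" and [measurable]: "p \<in> borel_measurable borel" "q \<in> borel_measurable borel"
    and "integrable (normal_measure a s) p" "integrable (normal_measure b s) q"
    and "integrable (normal_measure a' s) p" "integrable (normal_measure b' s) q"
  shows "(\<integral>(x, y). p x * q y \<partial>half_mix (gauss2 a b s) (gauss2 a' b' s))
     = ((\<integral>x. p x \<partial>normal_measure a s) * (\<integral>y. q y \<partial>normal_measure b s)
        + (\<integral>x. p x \<partial>normal_measure a' s) * (\<integral>y. q y \<partial>normal_measure b' s)) / 2"
proof -
  have "(\<lambda>(x, y). p x * q y) \<in> borel_measurable (lborel :: (real \<times> real) measure)"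
    unfolding measurable_lborel2 borel_prod[symmetric] by measurable
  then have "(\<integral>(x, y). p x * q y \<partial>half_mix (gauss2 a b s) (gauss2 a' b' s))
      = ((\<integral>(x, y). p x * q y \<partial>gauss2 a b s) + (\<integral>(x, y). p x * q y \<partial>gauss2 a' b' s)) / 2"
    using integral_gauss2_mult(1)[OF assms(1,4,5)] integral_gauss2_mult(1)[OF assms(1,6,7)]
    unfolding gauss2_def
    by (intro integral_half_mix_density) (simp_all add: gauss2_density_nonneg)
  then show ?thesis
    by (simp add: integral_gauss2_mult(2)[OF assms(1,4,5)] integral_gauss2_mult(2)[OF assms(1,6,7)])
qed

lemma integral_symmetric_gauss2_mix_xy:
  assumes "s > 0"
  shows "(\<integral>(x, y). x * y \<partial>half_mix (gauss2 a b s) (gauss2 (- a) (- b) s)) = a * b"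
proof -
  note id = integral_normal_measure_id[OF assms]
  have "(\<integral>(x, y). x * y \<partial>half_mix (gauss2 a b s) (gauss2 (- a) (- b) s))
      = (a * b + (- a) * (- b)) / 2"
    by (subst integral_half_mix_gauss2_mult[OF assms, where p="\<lambda>x. x" and q="\<lambda>y. y"])
      (simp_all add: id)
  then show ?thesis by simp
qed

lemma integral_symmetric_gauss2_mix_x2y2:
  assumes "s > 0"
  shows "(\<integral>(x, y). x\<^sup>2 * y\<^sup>2 \<partial>half_mix (gauss2 a b s) (gauss2 (- a) (- b) s))
       = (a\<^sup>2 + s\<^sup>2) * (b\<^sup>2 + s\<^sup>2)"
proof -
  note square = integral_normal_measure_square[OF assms]
  have "(\<integral>(x, y). x\<^sup>2 * y\<^sup>2 \<partial>half_mix (gauss2 a b s) (gauss2 (- a) (- b) s))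
      = ((a\<^sup>2 + s\<^sup>2) * (b\<^sup>2 + s\<^sup>2) + ((- a)\<^sup>2 + s\<^sup>2) * ((- b)\<^sup>2 + s\<^sup>2)) / 2"
    by (subst integral_half_mix_gauss2_mult[OF assms, where p="\<lambda>x. x\<^sup>2" and q="\<lambda>y. y\<^sup>2"])
      (simp_all add: square)
  then show ?thesis by simp
qed

lemma behaviour_gauss_behaviour:
  assumes "s > 0"
  shows "behaviour (gauss_behaviour l s)"
  unfolding behaviour_def gauss_behaviour_def
  by (intro ballI conjI prob_space_half_mix_gauss2[OF assms]) (simp add: half_mix_gauss2)

lemma no_signaling_gauss_behaviour:
  assumes "s > 0"
  shows "no_signaling (gauss_behaviour l s)"
  unfolding no_signaling_def gauss_behaviour_def
  by (auto simp: emeasure_half_mix_gauss2 emeasure_gauss2_marginals[OF assms] add.commute)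

lemma moment_gauss_behaviour_1_1:
  assumes "s > 0"
  shows "moment (gauss_behaviour l s) x y 1 1 = (-1) ^ (x * y) * l\<^sup>2"
  unfolding moment_def gauss_behaviour_def power_one_right integral_symmetric_gauss2_mix_xy[OF assms]
  by (simp add: power2_eq_square)

lemma moment_gauss_behaviour_2_2:
  assumes "s > 0"
  shows "moment (gauss_behaviour l s) x y 2 2 = (l\<^sup>2 + s\<^sup>2)\<^sup>2"
proof -
  have "((-1 :: real) ^ (x * y) * l)\<^sup>2 = l\<^sup>2"
    by (simp add: power_mult_distrib power_even_eq[symmetric] mult.commute[of _ 2])
  then show ?thesis
    unfolding moment_def gauss_behaviour_def integral_symmetric_gauss2_mix_x2y2[OF assms]
    by (simp add: power2_eq_square)
qed

lemma cfrd_violation_iff: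
  fixes l s :: real
  assumes "s > 0"
  shows "4 * (s\<^sup>2 + l\<^sup>2)\<^sup>2 < 8 * l ^ 4 \<longleftrightarrow> sqrt (1 + sqrt 2) < \<bar>l\<bar> / s"
proof -
  have sqrt2: "sqrt 2 * sqrt 2 = (2 :: real)" by simp
  have "4 * (s\<^sup>2 + l\<^sup>2)\<^sup>2 < 8 * l ^ 4 \<longleftrightarrow> (s\<^sup>2 + l\<^sup>2)\<^sup>2 < (sqrt 2 * l\<^sup>2)\<^sup>2"
    by (simp add: power_mult_distrib flip: power_mult)
  also have "\<dots> \<longleftrightarrow> s\<^sup>2 + l\<^sup>2 < sqrt 2 * l\<^sup>2"
    using power_mono_iff[of "sqrt 2 * l\<^sup>2" "s\<^sup>2 + l\<^sup>2" 2] by (simp add: not_le[symmetric])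
  also have "\<dots> \<longleftrightarrow> s\<^sup>2 < (sqrt 2 - 1) * l\<^sup>2"
    by (simp add: algebra_simps)
  also have "\<dots> \<longleftrightarrow> (1 + sqrt 2) * s\<^sup>2 < (1 + sqrt 2) * ((sqrt 2 - 1) * l\<^sup>2)"
    by (simp add: add_pos_nonneg)
  also have "(1 + sqrt 2) * ((sqrt 2 - 1) * l\<^sup>2) = l\<^sup>2"
    using sqrt2 by (simp add: algebra_simps)
  also have "(1 + sqrt 2) * s\<^sup>2 < l\<^sup>2 \<longleftrightarrow> 1 + sqrt 2 < (\<bar>l\<bar> / s)\<^sup>2"
    using assms by (simp add: power_divide pos_less_divide_eq)
  also have "\<dots> \<longleftrightarrow> sqrt (1 + sqrt 2) < \<bar>l\<bar> / s"
    using assms by (metis real_sqrt_less_iff real_sqrt_abs abs_of_nonneg zero_le_divide_iff abs_ge_zero less_imp_le)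
  finally show ?thesis .
qed

theorem mainTheorem1:
  fixes l \<sigma> :: real
  assumes "l \<noteq> 0" and "\<sigma> > 0"
  defines "\<mu> \<equiv> gauss_behaviour l \<sigma>"
  shows "behaviour \<mu> \<and> no_signaling \<mu>
    \<and> (moment \<mu> 0 0 1 1 - moment \<mu> 1 1 1 1)^2 + (moment \<mu> 0 1 1 1 + moment \<mu> 1 0 1 1)^2
        - (\<Sum>x\<in>{0,1}. \<Sum>y\<in>{0,1}. moment \<mu> x y 2 2) = 8 * l^4 - 4 * (\<sigma>^2 + l^2)^2
    \<and> ((moment \<mu> 0 0 1 1 - moment \<mu> 1 1 1 1)^2 + (moment \<mu> 0 1 1 1 + moment \<mu> 1 0 1 1)^2
          > (\<Sum>x\<in>{0,1::nat}. \<Sum>y\<in>{0,1::nat}. moment \<mu> x y 2 2)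
        \<longleftrightarrow> \<bar>l\<bar> / \<sigma> > sqrt (1 + sqrt 2))"
proof -
  have correlations:
    "(moment \<mu> 0 0 1 1 - moment \<mu> 1 1 1 1)^2 + (moment \<mu> 0 1 1 1 + moment \<mu> 1 0 1 1)^2 = 8 * l^4"
    unfolding \<mu>_def moment_gauss_behaviour_1_1[OF assms(2)]
    by (simp add: power2_eq_square power4_eq_xxxx)
  have squares: "(\<Sum>x\<in>{0,1::nat}. \<Sum>y\<in>{0,1::nat}. moment \<mu> x y 2 2) = 4 * (\<sigma>^2 + l^2)^2"
    unfolding \<mu>_def moment_gauss_behaviour_2_2[OF assms(2)] by (simp add: add.commute)
  have "behaviour \<mu>" "no_signaling \<mu>"
    unfolding \<mu>_def using assms(2) by (rule behaviour_gauss_behaviour no_signaling_gauss_behaviour)+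
  then show ?thesis
    unfolding correlations squares by (intro conjI refl cfrd_violation_iff assms(2))
qed

end
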